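(* Let $d\ge 1$ and $N\ge 1$, and let $\mathbf{a}_1,\dots,\mathbf{a}_N\in s'(\mathbb{Z}^d)$. Then the following are equivalent: (1) There exist $\mathbf{b}_1,\dots,\mathbf{b}_N\in s'(\mathbb{Z}^d)$ such that $\mathbf{b}_1\mathbf{a}_1+\cdots+\mathbf{b}_N\mathbf{a}_N=1$ (the constant function $1$ on $\mathbb{Z}^d$, products taken pointwise). (2) There exist $\delta>0$ and $K\in\mathbb{N}$ such that for all $\mathbf{n}\in\mathbb{Z}^d$, $$|\mathbf{a}_1(\mathbf{n})|+\cdots+|\mathbf{a}_N(\mathbf{n})|\ge \delta\,(1+\|\mathbf{n}\|_1)^{-K}.$$
   Context: For $\mathbf{n}\in\mathbb{Z}^d$, $\|\mathbf{n}\|_1$ denotes the $1$-norm. $s'(\mathbb{Z}^d)$ is the set of all maps $\mathbf{a}:\mathbb{Z}^d\to\mathbb{C}$ of at most polynomial growth, i.e. for which there exist $M>0$ and $k\in\mathbb{N}$ with $|\mathbf{a}(\mathbf{n})|\le M(1+\|\mathbf{n}\|_1)^k$ for all $\mathbf{n}\in\mathbb{Z}^d$. It is a commutative unital ring under pointwise addition and multiplication, with unit the constant function $1$. *)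

theory Defs
  imports "HOL-Analysis.Analysis"
begin

text \<open>Points of Z^d are modelled as int ^ 'd with 'd a finite (nonempty) index type, d = CARD('d).\<close>

definition norm1 :: "int ^ 'd::finite \<Rightarrow> int" where
  "norm1 n = (\<Sum>i\<in>UNIV. \<bar>n $ i\<bar>)"

definition slow_growth :: "(int ^ 'd::finite \<Rightarrow> complex) set" where
  "slow_growth = {a. \<exists>M>0. \<exists>k::nat. \<forall>n. cmod (a n) \<le> M * (1 + real_of_int (norm1 n)) ^ k}"

end

theory Submission
  imports Defs
begin

text \<open>Write \<open>w n = 1 + \<parallel>n\<parallel>\<^sub>1\<close> and \<open>S n = \<Sum>\<^sub>j |a\<^sub>j n|\<close>. If \<open>\<Sum>\<^sub>j b\<^sub>j a\<^sub>j = 1\<close> with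
  \<open>|b\<^sub>j| \<le> M w\<^sup>k\<close>, the triangle inequality gives \<open>1 \<le> M w\<^sup>k S\<close>, i.e. \<open>S \<ge> M\<inverse> w\<^sup>-\<^sup>k\<close>.
  Conversely, if \<open>S \<ge> \<delta> w\<^sup>-\<^sup>K\<close>, then \<open>b\<^sub>j = conj(sgn a\<^sub>j) / S\<close> satisfies \<open>\<Sum>\<^sub>j b\<^sub>j a\<^sub>j = S / S = 1\<close>
  and \<open>|b\<^sub>j| \<le> 1/S \<le> \<delta>\<inverse> w\<^sup>K\<close>.\<close>

lemma one_le_one_plus_norm1: "1 \<le> 1 + real_of_int (norm1 n)"
  unfolding norm1_def by (simp add: sum_nonneg)

lemma one_plus_norm1_pos: "0 < 1 + real_of_int (norm1 n)"
  using one_le_one_plus_norm1 by (rule less_le_trans[OF zero_less_one])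

lemma common_poly_bound:
  fixes f :: "'i \<Rightarrow> 'x \<Rightarrow> 'a::real_normed_vector" and w :: "'x \<Rightarrow> real"
  assumes "finite J" and "\<And>n. 1 \<le> w n"
    and "\<forall>j\<in>J. \<exists>M>0. \<exists>k::nat. \<forall>n. norm (f j n) \<le> M * w n ^ k"
  shows "\<exists>M>0. \<exists>k::nat. \<forall>j\<in>J. \<forall>n. norm (f j n) \<le> M * w n ^ k"
  using assms(1,3)
proof (induction J rule: finite_induct)
  case empty
  show ?case by (intro exI[of _ 1]) auto
next
  case (insert i J)
  then obtain M k where M: "M > 0" and Mk: "\<forall>j\<in>J. \<forall>n. norm (f j n) \<le> M * w n ^ k"
    by auto
  from insert.prems obtain M' k' where M': "M' > 0" and Mk': "\<forall>n. norm (f i n) \<le> M' * w n ^ k'"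
    by auto
  have weaken: "c * w n ^ m \<le> (M + M') * w n ^ (k + k')"
    if "0 < c" "c \<le> M + M'" "m \<le> k + k'" for c m n
    using that assms(2)[of n] by (intro mult_mono power_increasing) auto
  have "\<forall>j\<in>insert i J. \<forall>n. norm (f j n) \<le> (M + M') * w n ^ (k + k')"
  proof (intro ballI allI)
    fix j n assume "j \<in> insert i J"
    then consider "j = i" | "j \<in> J" by blast
    then show "norm (f j n) \<le> (M + M') * w n ^ (k + k')"
    proof cases
      case 1
      with Mk' have "norm (f j n) \<le> M' * w n ^ k'" by simp
      also have "\<dots> \<le> (M + M') * w n ^ (k + k')" using M M' by (intro weaken) auto
      finally show ?thesis .
    next
      case 2
      with Mk have "norm (f j n) \<le> M * w n ^ k" by simp
      also have "\<dots> \<le> (M + M') * w n ^ (k + k')" using M M' by (intro weaken) auto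
      finally show ?thesis .
    qed
  qed
  with M M' show ?case by (intro exI[of _ "M + M'"] exI[of _ "k + k'"]) auto
qed

lemma lower_bound_if_combination_eq_1:
  fixes a b :: "'i \<Rightarrow> 'x \<Rightarrow> 'a::real_normed_field" and w :: "'x \<Rightarrow> real"
  assumes "M > 0" and "w n > 0"
    and "\<forall>j\<in>J. norm (b j n) \<le> M * w n ^ k"
    and "(\<Sum>j\<in>J. b j n * a j n) = 1"
  shows "inverse M * w n powi - int k \<le> (\<Sum>j\<in>J. norm (a j n))"
proof -
  have "1 = norm (\<Sum>j\<in>J. b j n * a j n)" using assms(4) by simp
  also have "\<dots> \<le> (\<Sum>j\<in>J. norm (b j n) * norm (a j n))"
    by (rule order_trans[OF norm_sum]) (simp add: norm_mult)
  also have "\<dots> \<le> (\<Sum>j\<in>J. M * w n ^ k * norm (a j n))"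
    using assms(3) by (intro sum_mono mult_right_mono) auto
  also have "\<dots> = M * w n ^ k * (\<Sum>j\<in>J. norm (a j n))"
    by (simp add: sum_distrib_left)
  finally have "1 \<le> M * w n ^ k * (\<Sum>j\<in>J. norm (a j n))" .
  with assms(1,2) show ?thesis
    by (simp add: power_int_minus field_simps)
qed

lemma cnj_sgn_mult_self: "cnj (sgn z) * z = complex_of_real (cmod z)"
proof (cases "z = 0")
  case False
  have "cnj z * z = complex_of_real (cmod z ^ 2)"
    using complex_norm_square[of z] by (simp add: mult.commute)
  with False show ?thesis
    by (simp add: sgn_eq field_simps power2_eq_square)
qed simp

lemma combination_eq_1_if_lower_bound:
  fixes a :: "'i \<Rightarrow> 'x \<Rightarrow> complex" and w :: "'x \<Rightarrow> real"
  assumes "\<delta> > 0" and "\<And>n. w n > 0"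
    and "\<And>n. \<delta> * w n powi - int K \<le> (\<Sum>j\<in>J. cmod (a j n))"
  shows "\<exists>b. (\<forall>j\<in>J. \<forall>n. cmod (b j n) \<le> inverse \<delta> * w n ^ K)
            \<and> (\<forall>n. (\<Sum>j\<in>J. b j n * a j n) = 1)"
proof -
  define S where "S n = (\<Sum>j\<in>J. cmod (a j n))" for n
  have S_ge: "\<delta> \<le> S n * w n ^ K" for n
    using assms(3)[of n] assms(2)[of n] by (simp add: S_def power_int_minus field_simps)
  have S_pos: "S n > 0" for n
  proof -
    have "S n \<ge> 0" by (simp add: S_def sum_nonneg)
    moreover have "S n \<noteq> 0" using S_ge[of n] assms(1) by auto
    ultimately show ?thesis by simp
  qed
  define b where "b j n = cnj (sgn (a j n)) / complex_of_real (S n)" for j n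
  have "cmod (b j n) \<le> inverse \<delta> * w n ^ K" for j n
  proof -
    have "cmod (b j n) = cmod (sgn (a j n)) / S n"
      using S_pos[of n] by (simp add: b_def norm_divide)
    also have "\<dots> \<le> 1 / S n"
      using S_pos[of n] by (intro divide_right_mono) (simp_all add: norm_sgn)
    also have "\<dots> \<le> inverse \<delta> * w n ^ K"
      using S_ge[of n] S_pos[of n] assms(1) by (simp add: field_simps)
    finally show ?thesis .
  qed
  moreover have "(\<Sum>j\<in>J. b j n * a j n) = 1" for n
  proof -
    have "(\<Sum>j\<in>J. b j n * a j n) = (\<Sum>j\<in>J. complex_of_real (cmod (a j n)) / complex_of_real (S n))"
      by (simp add: b_def cnj_sgn_mult_self)
    also have "\<dots> = complex_of_real (S n) / complex_of_real (S n)"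
      by (simp only: S_def of_real_sum sum_divide_distrib)
    also have "\<dots> = 1" using S_pos[of n] by simp
    finally show ?thesis .
  qed
  ultimately show ?thesis by blast
qed

theorem theorem1p1:
  fixes a :: "nat \<Rightarrow> (int ^ 'd::finite \<Rightarrow> complex)" and N :: nat
  assumes "N \<ge> 1"
    and "\<forall>j<N. a j \<in> slow_growth"
  shows "(\<exists>b :: nat \<Rightarrow> (int ^ 'd \<Rightarrow> complex).
            (\<forall>j<N. b j \<in> slow_growth) \<and> (\<forall>n. (\<Sum>j<N. b j n * a j n) = 1))
     \<longleftrightarrow> (\<exists>\<delta>>0. \<exists>K::nat. \<forall>n. (\<Sum>j<N. cmod (a j n)) \<ge> \<delta> * (1 + real_of_int (norm1 n)) powi (- int K))"
proof
  assume "\<exists>b :: nat \<Rightarrow> (int ^ 'd \<Rightarrow> complex).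
            (\<forall>j<N. b j \<in> slow_growth) \<and> (\<forall>n. (\<Sum>j<N. b j n * a j n) = 1)"
  then obtain b where b_growth: "\<forall>j<N. b j \<in> slow_growth"
    and sum_eq_1: "\<forall>n. (\<Sum>j<N. b j n * a j n) = 1"
    by blast
  have "\<exists>M>0. \<exists>k::nat. \<forall>j\<in>{..<N}. \<forall>n. cmod (b j n) \<le> M * (1 + real_of_int (norm1 n)) ^ k"
    by (rule common_poly_bound) (use b_growth one_le_one_plus_norm1 in \<open>auto simp: slow_growth_def\<close>)
  then obtain M k where M_pos: "M > 0"
    and b_bound: "\<forall>j\<in>{..<N}. \<forall>n. cmod (b j n) \<le> M * (1 + real_of_int (norm1 n)) ^ k"
    by blast
  have "inverse M * (1 + real_of_int (norm1 n)) powi - int k \<le> (\<Sum>j<N. cmod (a j n))" for n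
    using b_bound sum_eq_1
    by (intro lower_bound_if_combination_eq_1[where w = "\<lambda>n. 1 + real_of_int (norm1 n)"]
        M_pos one_plus_norm1_pos) auto
  with M_pos show "\<exists>\<delta>>0. \<exists>K::nat. \<forall>n. (\<Sum>j<N. cmod (a j n)) \<ge> \<delta> * (1 + real_of_int (norm1 n)) powi (- int K)"
    by (intro exI[of _ "inverse M"] exI[of _ k]) auto
next
  assume "\<exists>\<delta>>0. \<exists>K::nat. \<forall>n. (\<Sum>j<N. cmod (a j n)) \<ge> \<delta> * (1 + real_of_int (norm1 n)) powi (- int K)"
  then obtain \<delta> K where \<delta>_pos: "\<delta> > 0"
    and lower_bound: "\<And>n. \<delta> * (1 + real_of_int (norm1 n)) powi (- int K) \<le> (\<Sum>j<N. cmod (a j n))"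
    by blast
  obtain b where b_bound: "\<forall>j\<in>{..<N}. \<forall>n. cmod (b j n) \<le> inverse \<delta> * (1 + real_of_int (norm1 n)) ^ K"
    and "\<forall>n. (\<Sum>j<N. b j n * a j n) = 1"
    using combination_eq_1_if_lower_bound[where w = "\<lambda>n. 1 + real_of_int (norm1 n)",
        OF \<delta>_pos one_plus_norm1_pos lower_bound]
    by blast
  moreover have "b j \<in> slow_growth" if "j < N" for j
    unfolding slow_growth_def using \<delta>_pos b_bound that
    by (auto intro!: exI[of _ "inverse \<delta>"] exI[of _ K])
  ultimately show "\<exists>b :: nat \<Rightarrow> (int ^ 'd \<Rightarrow> complex).
            (\<forall>j<N. b j \<in> slow_growth) \<and> (\<forall>n. (\<Sum>j<N. b j n * a j n) = 1)"
    by blast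
qed

end
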